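(* Let $V\subset(1,1,\dots,1)^\perp\subset\mathbb R^m$ be a self-saturated linear subspace. Then $V$ has an orthonormal basis $\{u_i\}$ such that $u_i\diamond u_j\in\mathbb Ru_i\cup\mathbb Ru_j$ for all $i\neq j$.
   Context: $\mathbb R^m$ carries its standard inner product and standard basis. For $a,b\in\mathbb R^m$, $a\diamond b=(a_1b_1,\dots,a_mb_m)$. A linear subspace $V\subset(1,\dots,1)^\perp$ is self-saturated if $a\diamond b\in V$ for all orthogonal vectors $a,b\in V$. *)

theory Defs
  imports "HOL-Analysis.Analysis"
begin

definition diamond :: "real^'m \<Rightarrow> real^'m \<Rightarrow> real^'m" (infixl "\<diamondsuit>" 70) where
  "a \<diamondsuit> b = (\<chi> i. a $ i * b $ i)"

definition ones :: "real^'m" where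
  "ones = (\<chi> i. 1)"

definition self_saturated :: "(real^'m) set \<Rightarrow> bool" where
  "self_saturated V \<longleftrightarrow> subspace V \<and> (\<forall>v\<in>V. v \<bullet> ones = 0) \<and>
     (\<forall>a\<in>V. \<forall>b\<in>V. a \<bullet> b = 0 \<longrightarrow> a \<diamondsuit> b \<in> V)"

end

theory Submission
  imports Defs
begin

text \<open>Choose a nonzero u \<in> V of minimal support and normalise it. For w \<in> V orthogonal to u,
  the vector u \<diamondsuit> w lies in V and is supported inside the support of u, so subtracting a
  suitable multiple of u kills one more coordinate; by minimality u \<diamondsuit> w is a multiple of u.
  Consequently the orthogonal complement of u in V is again closed under products of orthogonal
  pairs, because u \<bullet> (a \<diamondsuit> b) = a \<bullet> (u \<diamondsuit> b) vanishes there, and induction on the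
  dimension supplies the rest of the basis.\<close>

definition orthogonal_diamond_closed :: "(real^'n) set \<Rightarrow> bool" where
  "orthogonal_diamond_closed V \<longleftrightarrow>
     (\<forall>a\<in>V. \<forall>b\<in>V. orthogonal a b \<longrightarrow> a \<diamondsuit> b \<in> V)"

definition support_vec :: "real^'n \<Rightarrow> 'n set" where
  "support_vec v = {i. v $ i \<noteq> 0}"

lemma diamond_commute: "a \<diamondsuit> b = b \<diamondsuit> a"
  by (simp add: diamond_def vec_eq_iff mult.commute)

lemma inner_diamond_right: "u \<bullet> (a \<diamondsuit> b) = a \<bullet> (u \<diamondsuit> b)"
  by (simp add: diamond_def inner_vec_def mult.commute mult.left_commute)

lemma support_vec_scaleR: "c \<noteq> 0 \<Longrightarrow> support_vec (c *\<^sub>R v) = support_vec v"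
  by (simp add: support_vec_def)

lemma support_vec_eq_empty_iff: "support_vec v = {} \<longleftrightarrow> v = 0"
  by (simp add: support_vec_def vec_eq_iff)

lemma self_saturated_imp_orthogonal_diamond_closed:
  "self_saturated V \<Longrightarrow> orthogonal_diamond_closed V"
  by (simp add: self_saturated_def orthogonal_diamond_closed_def orthogonal_def)

lemma exists_unit_minimal_support:
  fixes V :: "(real^'n) set"
  assumes "subspace V" and "V \<noteq> {0}"
  obtains e where "e \<in> V" "norm e = 1"
    "\<And>v. v \<in> V \<Longrightarrow> v \<noteq> 0 \<Longrightarrow> card (support_vec e) \<le> card (support_vec v)"
proof -
  obtain v where "v \<in> V" "v \<noteq> 0"
    using assms subspace_0 by blast
  then obtain u where u: "u \<in> V" "u \<noteq> 0"
    and umin: "\<And>v. v \<in> V \<and> v \<noteq> 0 \<Longrightarrow> card (support_vec u) \<le> card (support_vec v)"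
    using ex_has_least_nat[of "\<lambda>v. v \<in> V \<and> v \<noteq> 0" v "\<lambda>v. card (support_vec v)"] by blast
  define e where "e = inverse (norm u) *\<^sub>R u"
  have "support_vec e = support_vec u"
    using u by (simp add: e_def support_vec_scaleR)
  moreover have "e \<in> V" "norm e = 1"
    using u assms(1) by (simp_all add: e_def subspace_scale)
  ultimately show thesis
    using that umin by simp
qed

lemma diamond_minimal_support_multiple:
  fixes V :: "(real^'n) set"
  assumes "subspace V" and "orthogonal_diamond_closed V" and "u \<in> V" and "u \<noteq> 0"
    and umin: "\<And>v. v \<in> V \<Longrightarrow> v \<noteq> 0 \<Longrightarrow> card (support_vec u) \<le> card (support_vec v)"
    and "w \<in> V" and "orthogonal u w"
  shows "\<exists>c. u \<diamondsuit> w = c *\<^sub>R u"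
proof -
  obtain i where i: "i \<in> support_vec u"
    using \<open>u \<noteq> 0\<close> support_vec_eq_empty_iff by blast
  define y where "y = u \<diamondsuit> w - ((u \<diamondsuit> w) $ i / u $ i) *\<^sub>R u"
  have "y \<in> V"
    using assms(1-3,6-7) unfolding y_def orthogonal_diamond_closed_def
    by (simp add: subspace_diff subspace_scale)
  have supp_y: "support_vec y \<subseteq> support_vec u - {i}"
    using i by (auto simp: y_def diamond_def support_vec_def)
  have "y = 0"
  proof (rule ccontr)
    assume "y \<noteq> 0"
    then have "card (support_vec u) \<le> card (support_vec y)"
      using umin \<open>y \<in> V\<close> by blast
    also have "\<dots> \<le> card (support_vec u - {i})"
      using supp_y by (rule card_mono[rotated]) simp
    also have "\<dots> < card (support_vec u)"
      using i by (intro card_Diff1_less) auto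
    finally show False by simp
  qed
  then show ?thesis
    unfolding y_def by (metis eq_iff_diff_eq_0)
qed

lemma orthogonal_diamond_closed_slice:
  fixes V :: "(real^'n) set"
  assumes "orthogonal_diamond_closed V"
    and "\<And>w. w \<in> V \<Longrightarrow> orthogonal u w \<Longrightarrow> \<exists>c. u \<diamondsuit> w = c *\<^sub>R u"
  shows "orthogonal_diamond_closed (V \<inter> {w. orthogonal u w})"
  unfolding orthogonal_diamond_closed_def
proof (intro ballI impI)
  fix a b
  assume a: "a \<in> V \<inter> {w. orthogonal u w}" and b: "b \<in> V \<inter> {w. orthogonal u w}"
    and "orthogonal a b"
  then have "a \<diamondsuit> b \<in> V"
    using assms(1) unfolding orthogonal_diamond_closed_def by blast
  moreover obtain c where "u \<diamondsuit> b = c *\<^sub>R u"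
    using assms(2) b by blast
  then have "orthogonal u (a \<diamondsuit> b)"
    using a by (simp add: orthogonal_def inner_diamond_right inner_commute)
  ultimately show "a \<diamondsuit> b \<in> V \<inter> {w. orthogonal u w}"
    by blast
qed

lemma span_insert_orthogonal_slice:
  fixes V :: "'a::real_inner set"
  assumes "subspace V" and "u \<in> V" and "u \<noteq> 0"
    and "span B = V \<inter> {w. orthogonal u w}"
  shows "span (insert u B) = V"
proof
  have "insert u B \<subseteq> V"
    using assms(2,4) span_superset[of B] by blast
  then show "span (insert u B) \<subseteq> V"
    using assms(1) by (rule span_minimal)
  show "V \<subseteq> span (insert u B)"
  proof
    fix x assume "x \<in> V"
    define p where "p = x - ((u \<bullet> x) / (u \<bullet> u)) *\<^sub>R u"
    have "orthogonal u p"
      using assms(3) by (simp add: p_def orthogonal_def inner_diff_right)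
    moreover have "p \<in> V"
      using assms(1,2) \<open>x \<in> V\<close> by (simp add: p_def subspace_diff subspace_scale)
    ultimately have "p \<in> span (insert u B)"
      using assms(4) span_mono[of B "insert u B"] by blast
    moreover have "((u \<bullet> x) / (u \<bullet> u)) *\<^sub>R u \<in> span (insert u B)"
      by (simp add: span_base span_scale)
    ultimately have "p + ((u \<bullet> x) / (u \<bullet> u)) *\<^sub>R u \<in> span (insert u B)"
      by (rule span_add)
    then show "x \<in> span (insert u B)"
      by (simp add: p_def)
  qed
qed

lemma orthonormal_diamond_basis:
  fixes V :: "(real^'n) set"
  assumes "subspace V" and "orthogonal_diamond_closed V"
  shows "\<exists>B. B \<subseteq> V \<and> span B = V
           \<and> pairwise orthogonal B \<and> (\<forall>u\<in>B. norm u = 1)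
           \<and> (\<forall>u\<in>B. \<forall>w\<in>B. u \<noteq> w \<longrightarrow>
                 u \<diamondsuit> w \<in> range (\<lambda>c. c *\<^sub>R u) \<union> range (\<lambda>c. c *\<^sub>R w))"
  using assms
proof (induction "dim V" arbitrary: V rule: less_induct)
  case less
  show ?case
  proof (cases "V = {0}")
    case True
    then show ?thesis by (intro exI[of _ "{}"]) auto
  next
    case False
    obtain e where e: "e \<in> V" "norm e = 1"
      and emin: "\<And>v. v \<in> V \<Longrightarrow> v \<noteq> 0 \<Longrightarrow> card (support_vec e) \<le> card (support_vec v)"
      using exists_unit_minimal_support[OF less.prems(1) False] by blast
    have "e \<noteq> 0"
      using e by auto
    have e_multiple: "\<And>w. w \<in> V \<Longrightarrow> orthogonal e w \<Longrightarrow> \<exists>c. e \<diamondsuit> w = c *\<^sub>R e"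
      using diamond_minimal_support_multiple[OF less.prems] e emin \<open>e \<noteq> 0\<close> by blast
    define W where "W = V \<inter> {w. orthogonal e w}"
    have "subspace W"
      unfolding W_def using less.prems(1) subspace_orthogonal_to_vector by (rule subspace_inter)
    have "e \<notin> W"
      using \<open>e \<noteq> 0\<close> by (simp add: W_def orthogonal_self)
    then have "W \<subset> V"
      using e(1) W_def by blast
    then have "dim W < dim V"
      using dim_psubset \<open>subspace W\<close> less.prems(1) by (metis span_eq_iff)
    moreover have "orthogonal_diamond_closed W"
      unfolding W_def using less.prems(2) e_multiple by (rule orthogonal_diamond_closed_slice)
    ultimately obtain B where B: "B \<subseteq> W" "span B = W" "pairwise orthogonal B"
       "\<forall>u\<in>B. norm u = 1"
       "\<forall>u\<in>B. \<forall>w\<in>B. u \<noteq> w \<longrightarrow> u \<diamondsuit> w \<in> range (\<lambda>c. c *\<^sub>R u) \<union> range (\<lambda>c. c *\<^sub>R w)"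
      using less.hyps \<open>subspace W\<close> by blast
    have e_B: "e \<diamondsuit> w \<in> range (\<lambda>c. c *\<^sub>R e)" if "w \<in> B" for w
      using e_multiple[of w] B(1) that by (auto simp: W_def)
    show ?thesis
    proof (intro exI[of _ "insert e B"] conjI)
      show "insert e B \<subseteq> V"
        using e B(1) by (auto simp: W_def)
      show "span (insert e B) = V"
        using span_insert_orthogonal_slice less.prems(1) e(1) \<open>e \<noteq> 0\<close> B(2)
        unfolding W_def by blast
      show "pairwise orthogonal (insert e B)"
        using B(1,3) by (auto simp: W_def pairwise_insert orthogonal_commute)
      show "\<forall>u\<in>insert e B. norm u = 1"
        using B(4) e(2) by auto
      show "\<forall>u\<in>insert e B. \<forall>w\<in>insert e B. u \<noteq> w \<longrightarrow>
              u \<diamondsuit> w \<in> range (\<lambda>c. c *\<^sub>R u) \<union> range (\<lambda>c. c *\<^sub>R w)"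
        using B(5) e_B by (auto simp: diamond_commute)
    qed
  qed
qed

theorem mainTheorem9:
  fixes V :: "(real^'m) set"
  assumes "subspace V"
    and "\<forall>v\<in>V. v \<bullet> ones = 0"
    and "self_saturated V"
  shows "\<exists>B. B \<subseteq> V \<and> independent B \<and> span B = V
           \<and> pairwise orthogonal B \<and> (\<forall>u\<in>B. norm u = 1)
           \<and> (\<forall>u\<in>B. \<forall>w\<in>B. u \<noteq> w \<longrightarrow>
                 u \<diamondsuit> w \<in> range (\<lambda>c. c *\<^sub>R u) \<union> range (\<lambda>c. c *\<^sub>R w))"
proof -
  obtain B where B: "B \<subseteq> V" "span B = V" "pairwise orthogonal B" "\<forall>u\<in>B. norm u = 1"
    "\<forall>u\<in>B. \<forall>w\<in>B. u \<noteq> w \<longrightarrow> u \<diamondsuit> w \<in> range (\<lambda>c. c *\<^sub>R u) \<union> range (\<lambda>c. c *\<^sub>R w)"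
    using orthonormal_diamond_basis[OF assms(1) self_saturated_imp_orthogonal_diamond_closed[OF assms(3)]]
    by blast
  have "0 \<notin> B"
    using B(4) by force
  then have "independent B"
    using B(3) pairwise_orthogonal_independent by blast
  then show ?thesis
    using B by blast
qed

end
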